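(* In the Poisson matching problem $PM(\lambda,\mu)$ (defined in the context), for any blue points $b_1,b_2\in\mathcal{B}$, if $\mathcal{P}(b_1)\cap\mathcal{P}(b_2)\neq\emptyset$ then $\mathcal{P}(b_1)=\mathcal{P}(b_2)$.
   Context: Poisson matching problem $PM(\lambda,\mu)$, $0<\lambda\le\mu$: $\mathcal{B}$ (blue points) and $\mathcal{R}$ (red points) are independent homogeneous Poisson point processes on $\mathbb{R}$ of intensities $\lambda$ and $\mu$ respectively; $\mathcal{S}=\mathcal{B}\cup\mathcal{R}$. A matching is a map $\mathcal{M}:\mathcal{S}\to\mathcal{S}\cup\{\infty\}$ with $\mathcal{M}(r)\in\mathcal{B}\cup\{\infty\}$ for red $r$, $\mathcal{M}(b)\in\mathcal{R}\cup\{\infty\}$ for blue $b$, and $\mathcal{M}(r)=b$ iff $\mathcal{M}(b)=r$. The matching segment $I_\mathcal{M}(x)$ is the open interval with endpoints $x$ and $\mathcal{M}(x)$ ($(x,\infty)$ if $x$ is unmatched). $\mathcal{M}$ is nested if for all $x,y\in\mathcal{S}$, $x\in I_\mathcal{M}(y)$ implies $\mathcal{M}(x)$ lies in the closure of $I_\mathcal{M}(y)$. For $b\in\mathcal{B}$, the set of potential matches of $b$ is $\mathcal{P}(b)=\{r\in\mathcal{R}:\text{there is a nested matching }\mathcal{M}\text{ with }\mathcal{M}(b)=r\}$. *)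

theory Defs
  imports Complex_Main "HOL-Library.Extended_Real"
begin

text \<open>Points are reals; a partner value of \<infinity> (in ereal) means "unmatched".\<close>

definition is_matching :: "real set \<Rightarrow> real set \<Rightarrow> (real \<Rightarrow> ereal) \<Rightarrow> bool" where
  "is_matching B R M \<longleftrightarrow>
     (\<forall>r\<in>R. M r \<in> ereal ` B \<union> {\<infinity>}) \<and>
     (\<forall>b\<in>B. M b \<in> ereal ` R \<union> {\<infinity>}) \<and>
     (\<forall>r\<in>R. \<forall>b\<in>B. M r = ereal b \<longleftrightarrow> M b = ereal r)"

definition match_seg :: "(real \<Rightarrow> ereal) \<Rightarrow> real \<Rightarrow> real set" where
  "match_seg M x = {y. min (ereal x) (M x) < ereal y \<and> ereal y < max (ereal x) (M x)}"

definition match_seg_closure :: "(real \<Rightarrow> ereal) \<Rightarrow> real \<Rightarrow> ereal set" where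
  "match_seg_closure M x = {z. min (ereal x) (M x) \<le> z \<and> z \<le> max (ereal x) (M x)}"

definition nested :: "real set \<Rightarrow> (real \<Rightarrow> ereal) \<Rightarrow> bool" where
  "nested S M \<longleftrightarrow> (\<forall>x\<in>S. \<forall>y\<in>S. x \<in> match_seg M y \<longrightarrow> M x \<in> match_seg_closure M y)"

definition potential_matches :: "real set \<Rightarrow> real set \<Rightarrow> real \<Rightarrow> real set" where
  "potential_matches B R b =
     {r \<in> R. \<exists>M. is_matching B R M \<and> nested (B \<union> R) M \<and> M b = ereal r}"

end

theory Submission
  imports Defs
begin

text \<open>A nested matching that pairs b with r must pair the points strictly between b and r
among themselves, so that open interval holds as many blue as red points. Conversely, if it does,
matching a closest bichromatic pair and recursing gives a nested perfect matching of its points;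
adding the pair b, r and leaving every other point unmatched yields a nested matching of the whole
configuration. Hence r is a potential match of b exactly when the walk counting blue points minus
red points rises by one from b to r, so the set of potential matches of b depends on b
only through the value of the walk at b.\<close>

definition strictly_between :: "real \<Rightarrow> real \<Rightarrow> real set" where
  "strictly_between a c = {min a c<..<max a c}"

lemma finite_strictly_between:
  assumes "\<forall>a c. finite (S \<inter> {a..c})"
  shows "finite (S \<inter> strictly_between b r)"
  using assms by (auto intro: finite_subset[of _ "S \<inter> {min b r..max b r}"] simp: strictly_between_def)

lemma strictly_between_commute: "strictly_between a c = strictly_between c a"
  by (simp add: strictly_between_def min.commute max.commute)

lemma endpoints_not_strictly_between: "a \<notin> strictly_between a c" "c \<notin> strictly_between a c"
  by (auto simp: strictly_between_def)

definition nested_perfect_matching :: "real set \<Rightarrow> real set \<Rightarrow> real set \<Rightarrow> (real \<Rightarrow> real) \<Rightarrow> bool" where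
  "nested_perfect_matching B R F N \<longleftrightarrow>
     (\<forall>x\<in>F \<inter> B. N x \<in> F \<inter> R) \<and> (\<forall>x\<in>F \<inter> R. N x \<in> F \<inter> B) \<and> (\<forall>x\<in>F. N (N x) = x) \<and>
     (\<forall>x\<in>F. \<forall>y\<in>F. x \<in> strictly_between y (N y) \<longrightarrow> N x \<in> {min y (N y)..max y (N y)})"

lemma closed_span_if_noncrossing:
  assumes "x \<in> strictly_between y z"
    and "y \<in> strictly_between x w \<longleftrightarrow> z \<in> strictly_between x w"
  shows "w \<in> {min y z..max y z}"
  using assms by (auto simp: strictly_between_def min_def max_def split: if_splits)

lemma nested_perfect_matching_insert_pair:
  assumes N: "nested_perfect_matching B R F N" and F_coloured: "F \<subseteq> B \<union> R" and disj: "B \<inter> R = {}"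
    and u: "u \<in> B" "u \<notin> F" and v: "v \<in> R" "v \<notin> F"
    and noncrossing: "\<And>x. x \<in> F \<Longrightarrow> x \<in> strictly_between u v \<longleftrightarrow> N x \<in> strictly_between u v"
  shows "nested_perfect_matching B R (insert u (insert v F)) (N(u := v, v := u))"
proof -
  let ?F = "insert u (insert v F)" and ?N = "N(u := v, v := u)"
  have "u \<noteq> v" using u v disj by auto
  have N_in_F: "N x \<in> F" if "x \<in> F" for x
    using N F_coloured that unfolding nested_perfect_matching_def by blast
  have upd_eq: "?N x = N x" if "x \<in> F" for x
    using that u v by auto
  have nest: "?N x \<in> {min y (?N y)..max y (?N y)}"
    if x: "x \<in> ?F" and y: "y \<in> ?F" and xy: "x \<in> strictly_between y (?N y)" for x y
  proof (cases "y \<in> F")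
    case False
    then have "y = u \<and> ?N y = v \<or> y = v \<and> ?N y = u"
      using y \<open>u \<noteq> v\<close> by auto
    then have span: "strictly_between y (?N y) = strictly_between u v"
      and closed: "{min y (?N y)..max y (?N y)} = {min u v..max u v}"
      by (auto simp: strictly_between_commute min.commute max.commute)
    have "x \<in> F"
      using x xy endpoints_not_strictly_between unfolding span by auto
    then have "N x \<in> strictly_between u v"
      using noncrossing xy unfolding span by blast
    then show ?thesis
      using \<open>x \<in> F\<close> unfolding closed upd_eq[OF \<open>x \<in> F\<close>] by (auto simp: strictly_between_def)
  next
    case True
    show ?thesis
    proof (cases "x \<in> F")
      case True
      then show ?thesis
        using N \<open>y \<in> F\<close> xy
        unfolding nested_perfect_matching_def upd_eq[OF \<open>x \<in> F\<close>] upd_eq[OF \<open>y \<in> F\<close>] by blast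
    next
      case False
      then have "x = u \<and> ?N x = v \<or> x = v \<and> ?N x = u"
        using x \<open>u \<noteq> v\<close> by auto
      moreover have "y \<in> strictly_between u v \<longleftrightarrow> N y \<in> strictly_between u v"
        using noncrossing \<open>y \<in> F\<close> .
      ultimately show ?thesis
        using closed_span_if_noncrossing[of x y "N y"] xy upd_eq[OF \<open>y \<in> F\<close>]
        by (auto simp: strictly_between_commute)
    qed
  qed
  show ?thesis
    unfolding nested_perfect_matching_def
  proof (intro conjI ballI impI)
    fix x assume "x \<in> ?F \<inter> B"
    then show "?N x \<in> ?F \<inter> R"
      using N disj u v unfolding nested_perfect_matching_def by auto
  next
    fix x assume "x \<in> ?F \<inter> R"
    then show "?N x \<in> ?F \<inter> B"
      using N disj u v unfolding nested_perfect_matching_def by auto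
  next
    fix x assume "x \<in> ?F"
    then show "?N (?N x) = x"
      using N N_in_F upd_eq u v unfolding nested_perfect_matching_def by auto
  qed (rule nest)
qed

lemma exists_adjacent_bichromatic_pair:
  assumes "finite F" "F \<subseteq> B \<union> R" "B \<inter> F \<noteq> {}" "R \<inter> F \<noteq> {}"
  obtains u v where "u \<in> B \<inter> F" "v \<in> R \<inter> F" "F \<inter> strictly_between u v = {}"
proof -
  let ?P = "(B \<inter> F) \<times> (R \<inter> F)" and ?d = "\<lambda>(u, v). \<bar>u - v\<bar>"
  have "finite ?P" "?P \<noteq> {}"
    using assms by auto
  then obtain u v where uv: "(u, v) \<in> ?P" and closest: "\<And>p. p \<in> ?P \<Longrightarrow> ?d (u, v) \<le> ?d p"
    using ex_is_arg_min_if_finite[of ?P ?d] unfolding is_arg_min_def by fastforce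
  have "z \<notin> strictly_between u v" if "z \<in> F" for z
  proof
    assume z: "z \<in> strictly_between u v"
    then have "\<bar>z - v\<bar> < \<bar>u - v\<bar>" "\<bar>u - z\<bar> < \<bar>u - v\<bar>"
      by (auto simp: strictly_between_def min_def max_def split: if_splits)
    moreover have "(z, v) \<in> ?P \<or> (u, z) \<in> ?P"
      using \<open>z \<in> F\<close> assms(2) uv by auto
    ultimately show False
      using closest by fastforce
  qed
  then show thesis
    using that uv by blast
qed

lemma nested_perfect_matching_exists:
  assumes "finite F" "F \<subseteq> B \<union> R" "B \<inter> R = {}" "card (B \<inter> F) = card (R \<inter> F)"
  shows "\<exists>N. nested_perfect_matching B R F N"
  using assms
proof (induction F rule: finite_psubset_induct)
  case (psubset F)
  show ?case
  proof (cases "B \<inter> F = {}")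
    case True
    then have "F = {}"
      using psubset.prems psubset.hyps by (auto simp: card_eq_0_iff)
    then show ?thesis
      unfolding nested_perfect_matching_def by auto
  next
    case False
    then have "R \<inter> F \<noteq> {}"
      using psubset.prems psubset.hyps by (auto simp: card_eq_0_iff)
    then obtain u v where u: "u \<in> B \<inter> F" and v: "v \<in> R \<inter> F" and adjacent: "F \<inter> strictly_between u v = {}"
      using exists_adjacent_bichromatic_pair psubset.hyps psubset.prems \<open>B \<inter> F \<noteq> {}\<close> by metis
    define F' where "F' = F - {u, v}"
    have "B \<inter> F' = B \<inter> F - {u}" "R \<inter> F' = R \<inter> F - {v}"
      unfolding F'_def using u v psubset.prems by auto
    then have "card (B \<inter> F') = card (R \<inter> F')"
      using u v psubset by auto
    moreover have "F' \<subset> F"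
      unfolding F'_def using u by auto
    ultimately obtain N where N: "nested_perfect_matching B R F' N"
      using psubset by (metis psubset_imp_subset subset_trans)
    have "\<And>x. x \<in> F' \<Longrightarrow> N x \<in> F'"
      using N psubset.prems \<open>F' \<subset> F\<close> unfolding nested_perfect_matching_def by blast
    then have "nested_perfect_matching B R (insert u (insert v F')) (N(u := v, v := u))"
      using N u v adjacent psubset.prems \<open>F' \<subset> F\<close>
      by (intro nested_perfect_matching_insert_pair) (auto simp: F'_def)
    moreover have "insert u (insert v F') = F"
      unfolding F'_def using u v by auto
    ultimately show ?thesis
      by auto
  qed
qed


lemma match_seg_ereal: "M x = ereal y \<Longrightarrow> match_seg M x = strictly_between x y"
  by (auto simp: match_seg_def strictly_between_def min_def max_def)

lemma match_seg_closure_ereal: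
  assumes "M x = ereal y"
  shows "match_seg_closure M x = ereal ` {min x y..max x y}"
proof -
  have "z \<in> ereal ` {min x y..max x y}" if "ereal (min x y) \<le> z" "z \<le> ereal (max x y)" for z
    using that by (cases z) (auto simp del: ereal_min ereal_max)
  then show ?thesis
    unfolding match_seg_closure_def assms ereal_min[symmetric] ereal_max[symmetric]
    by (auto simp del: ereal_min ereal_max)
qed

lemma match_seg_infinity: "M x = \<infinity> \<Longrightarrow> match_seg M x = {x<..}"
  by (auto simp: match_seg_def)

lemma match_seg_closure_infinity: "M x = \<infinity> \<Longrightarrow> match_seg_closure M x = {z. ereal x \<le> z}"
  by (auto simp: match_seg_closure_def)

lemma is_matching_swap: "is_matching B R M \<longleftrightarrow> is_matching R B M"
  unfolding is_matching_def by blast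

lemma is_matching_partner:
  assumes "is_matching B R M" "x \<in> B" "M x = ereal y"
  shows "y \<in> R" "M y = ereal x"
  using assms unfolding is_matching_def by auto

lemma nested_matching_of_interval:
  assumes N: "nested_perfect_matching B R ((B \<union> R) \<inter> {lo..hi}) N" and disj: "B \<inter> R = {}"
  defines "M \<equiv> \<lambda>x. if x \<in> (B \<union> R) \<inter> {lo..hi} then ereal (N x) else \<infinity>"
  shows "is_matching B R M" "nested (B \<union> R) M"
proof -
  let ?D = "(B \<union> R) \<inter> {lo..hi}"
  have ND: "N x \<in> ?D" if "x \<in> ?D" for x
    using N that unfolding nested_perfect_matching_def by blast
  show "is_matching B R M"
    using N disj unfolding is_matching_def nested_perfect_matching_def M_def
    by (auto split: if_splits)
  show "nested (B \<union> R) M"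
    unfolding nested_def
  proof (intro ballI impI)
    fix x y assume x: "x \<in> B \<union> R" and y: "y \<in> B \<union> R" and xy: "x \<in> match_seg M y"
    show "M x \<in> match_seg_closure M y"
    proof (cases "y \<in> ?D")
      case True
      then have My: "M y = ereal (N y)"
        by (simp add: M_def)
      have "x \<in> strictly_between y (N y)"
        using xy match_seg_ereal[of M, OF My] by simp
      moreover have "x \<in> ?D"
        using calculation x True ND[OF True] by (auto simp: strictly_between_def)
      ultimately show ?thesis
        using N True match_seg_closure_ereal[of M, OF My]
        unfolding nested_perfect_matching_def by (simp add: M_def)
    next
      case False
      then have "M y = \<infinity>"
        by (simp add: M_def)
      then have "y < x" and closure: "match_seg_closure M y = {z. ereal y \<le> z}"
        using xy match_seg_infinity match_seg_closure_infinity by auto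
      show ?thesis
      proof (cases "x \<in> ?D")
        case True
        then have "y < lo"
          using False y \<open>y < x\<close> by auto
        moreover have "lo \<le> N x"
          using ND[OF True] by simp
        ultimately show ?thesis
          using True unfolding closure by (simp add: M_def)
      next
        case False
        then have "M x = \<infinity>"
          by (simp add: M_def)
        then show ?thesis
          unfolding closure by simp
      qed
    qed
  qed
qed

lemma card_strictly_between_eq_if_matched:
  assumes disj: "B \<inter> R = {}" and M: "is_matching B R M" "nested (B \<union> R) M"
    and b: "b \<in> B" "M b = ereal r"
  shows "card (B \<inter> strictly_between b r) = card (R \<inter> strictly_between b r)"
proof -
  let ?I = "strictly_between b r" and ?f = "\<lambda>x. real_of_ereal (M x)"
  have r: "r \<in> R" "M r = ereal b"
    using is_matching_partner[OF M(1) b] .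
  have partner_within: "\<exists>y. M x = ereal y \<and> y \<in> {min b r..max b r}"
    if "x \<in> B \<union> R" "x \<in> ?I" for x
  proof -
    have "M x \<in> match_seg_closure M b"
      using M(2) that b match_seg_ereal[of M b r] unfolding nested_def by blast
    then show ?thesis
      using match_seg_closure_ereal[of M, OF b(2)] by auto
  qed
  have blue: "?f x \<in> R \<inter> ?I \<and> ?f (?f x) = x" if x: "x \<in> B \<inter> ?I" for x
  proof -
    obtain y where y: "M x = ereal y" "y \<in> {min b r..max b r}"
      using partner_within x by blast
    have "y \<in> R" "M y = ereal x"
      using is_matching_partner[OF M(1) _ y(1)] x by auto
    moreover have "y \<noteq> b"
      using \<open>y \<in> R\<close> b(1) disj by auto
    moreover have "y \<noteq> r"
      using \<open>M y = ereal x\<close> r(2) x by (auto simp: strictly_between_def)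
    ultimately show ?thesis
      using y by (auto simp: strictly_between_def)
  qed
  have red: "?f x \<in> B \<inter> ?I \<and> ?f (?f x) = x" if x: "x \<in> R \<inter> ?I" for x
  proof -
    obtain y where y: "M x = ereal y" "y \<in> {min b r..max b r}"
      using partner_within x by blast
    have "y \<in> B" "M y = ereal x"
      using is_matching_partner[OF is_matching_swap[THEN iffD1, OF M(1)] _ y(1)] x by auto
    moreover have "y \<noteq> r"
      using \<open>y \<in> B\<close> r(1) disj by auto
    moreover have "y \<noteq> b"
      using \<open>M y = ereal x\<close> b(2) x by (auto simp: strictly_between_def)
    ultimately show ?thesis
      using y by (auto simp: strictly_between_def)
  qed
  have "bij_betw ?f (B \<inter> ?I) (R \<inter> ?I)"
    by (rule bij_betw_byWitness[where f' = ?f]) (use blue red in blast)+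
  then show ?thesis
    by (rule bij_betw_same_card)
qed

lemma potential_match_if_card_strictly_between_eq:
  assumes disj: "B \<inter> R = {}" and b: "b \<in> B" and r: "r \<in> R"
    and fin: "finite ((B \<union> R) \<inter> strictly_between b r)"
    and balanced: "card (B \<inter> strictly_between b r) = card (R \<inter> strictly_between b r)"
  shows "r \<in> potential_matches B R b"
proof -
  let ?F = "(B \<union> R) \<inter> strictly_between b r"
  have "B \<inter> ?F = B \<inter> strictly_between b r" "R \<inter> ?F = R \<inter> strictly_between b r"
    by auto
  then obtain N where N: "nested_perfect_matching B R ?F N"
    using nested_perfect_matching_exists[of ?F B R] fin disj balanced by auto
  have "\<And>x. x \<in> ?F \<Longrightarrow> N x \<in> ?F"
    using N unfolding nested_perfect_matching_def by blast
  then have "nested_perfect_matching B R (insert b (insert r ?F)) (N(b := r, r := b))"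
    using N disj b r endpoints_not_strictly_between
    by (intro nested_perfect_matching_insert_pair) auto
  moreover have "insert b (insert r ?F) = (B \<union> R) \<inter> {min b r..max b r}"
    using b r by (auto simp: strictly_between_def min_def max_def)
  ultimately have N': "nested_perfect_matching B R ((B \<union> R) \<inter> {min b r..max b r}) (N(b := r, r := b))"
    by simp
  have "b \<noteq> r"
    using b r disj by auto
  then show ?thesis
    unfolding potential_matches_def
    using r b nested_matching_of_interval[OF N' disj] by force
qed

lemma potential_matches_iff:
  assumes disj: "B \<inter> R = {}" and b: "b \<in> B"
    and fin: "finite ((B \<union> R) \<inter> strictly_between b r)"
  shows "r \<in> potential_matches B R b \<longleftrightarrow>
           r \<in> R \<and> card (B \<inter> strictly_between b r) = card (R \<inter> strictly_between b r)"
  using card_strictly_between_eq_if_matched[OF disj] potential_match_if_card_strictly_between_eq[OF disj b]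
    assms unfolding potential_matches_def by blast

definition charge :: "real set \<Rightarrow> real set \<Rightarrow> real set \<Rightarrow> int" where
  "charge B R S = int (card (B \<inter> S)) - int (card (R \<inter> S))"

lemma charge_empty [simp]: "charge B R {} = 0"
  by (simp add: charge_def)

lemma charge_Un:
  assumes "finite ((B \<union> R) \<inter> S)" "finite ((B \<union> R) \<inter> T)" "S \<inter> T = {}"
  shows "charge B R (S \<union> T) = charge B R S + charge B R T"
proof -
  have "card (X \<inter> (S \<union> T)) = card (X \<inter> S) + card (X \<inter> T)" if "X \<subseteq> B \<union> R" for X
  proof -
    have "X \<inter> (S \<union> T) = (X \<inter> S) \<union> (X \<inter> T)"
      by blast
    moreover have "finite (X \<inter> S)" "finite (X \<inter> T)"
      using assms(1,2) that by (meson finite_subset inf_mono order_refl)+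
    ultimately show ?thesis
      using assms(3) by (simp add: card_Un_disjoint disjoint_iff)
  qed
  then show ?thesis
    unfolding charge_def by simp
qed

definition discrepancy :: "real set \<Rightarrow> real set \<Rightarrow> real \<Rightarrow> int" where
  "discrepancy B R x = charge B R {0..<x} - charge B R {x..<0}"

lemma discrepancy_diff:
  assumes fin: "\<forall>a c. finite ((B \<union> R) \<inter> {a..c})" and "x \<le> y"
  shows "discrepancy B R y - discrepancy B R x = charge B R {x..<y}"
proof -
  have fin': "finite ((B \<union> R) \<inter> {a..<c})" for a c
    using fin by (meson finite_subset Int_mono atLeastLessThan_subseteq_atLeastAtMost_iff order_refl)
  consider "0 \<le> x" | "x < 0" "0 \<le> y" | "y < 0"
    by linarith
  then show ?thesis
  proof cases
    case 1
    then have "{0..<y} = {0..<x} \<union> {x..<y}"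
      using \<open>x \<le> y\<close> by auto
    then show ?thesis
      using 1 \<open>x \<le> y\<close> charge_Un[OF fin' fin', of 0 x x y] unfolding discrepancy_def by simp
  next
    case 2
    then have "{x..<y} = {x..<0} \<union> {0..<y}"
      by auto
    then show ?thesis
      using 2 charge_Un[OF fin' fin', of x 0 0 y] unfolding discrepancy_def by simp
  next
    case 3
    then have "{x..<0} = {x..<y} \<union> {y..<0}"
      using \<open>x \<le> y\<close> by auto
    then show ?thesis
      using 3 \<open>x \<le> y\<close> charge_Un[OF fin' fin', of x y y 0] unfolding discrepancy_def by simp
  qed
qed

lemma card_strictly_between_eq_iff_discrepancy:
  assumes disj: "B \<inter> R = {}" and fin: "\<forall>a c. finite ((B \<union> R) \<inter> {a..c})"
    and b: "b \<in> B" and r: "r \<in> R"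
  shows "card (B \<inter> strictly_between b r) = card (R \<inter> strictly_between b r) \<longleftrightarrow>
           discrepancy B R r = discrepancy B R b + 1"
proof -
  let ?I = "strictly_between b r"
  have fin_I: "finite ((B \<union> R) \<inter> ?I)"
    using finite_strictly_between[OF fin] .
  have fin_point: "finite ((B \<union> R) \<inter> {p})" for p
    by simp
  have balanced_iff: "card (B \<inter> ?I) = card (R \<inter> ?I) \<longleftrightarrow> charge B R ?I = 0"
    by (simp add: charge_def)
  show ?thesis
  proof (cases "b < r")
    case True
    then have "{b..<r} = {b} \<union> ?I"
      by (auto simp: strictly_between_def)
    moreover have "charge B R {b} = 1"
      using b disj by (auto simp: charge_def)
    ultimately have "charge B R {b..<r} = 1 + charge B R ?I"
      using charge_Un[OF fin_point fin_I, of b] by (simp add: strictly_between_def)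
    then show ?thesis
      using discrepancy_diff[OF fin, of b r] True balanced_iff by linarith
  next
    case False
    then have "r < b"
      using b r disj by (cases "b = r") auto
    then have "{r..<b} = {r} \<union> ?I"
      by (auto simp: strictly_between_def)
    moreover have "charge B R {r} = -1"
      using r disj by (auto simp: charge_def)
    ultimately have "charge B R {r..<b} = -1 + charge B R ?I"
      using charge_Un[OF fin_point fin_I, of r] by (simp add: strictly_between_def)
    then show ?thesis
      using discrepancy_diff[OF fin, of r b] \<open>r < b\<close> balanced_iff by linarith
  qed
qed

theorem potential_matches_eq_discrepancy_level:
  assumes disj: "B \<inter> R = {}" and fin: "\<forall>a c. finite ((B \<union> R) \<inter> {a..c})" and b: "b \<in> B"
  shows "potential_matches B R b = {r \<in> R. discrepancy B R r = discrepancy B R b + 1}"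
  using potential_matches_iff[OF disj b finite_strictly_between[OF fin]]
    card_strictly_between_eq_iff_discrepancy[OF disj fin b] by blast

theorem lemma4p3:
  fixes B R :: "real set" and b1 b2 :: real
  assumes disj: "B \<inter> R = {}"
    and loc_fin: "\<forall>a c. finite ((B \<union> R) \<inter> {a..c})"
    and "b1 \<in> B" and "b2 \<in> B"
    and "potential_matches B R b1 \<inter> potential_matches B R b2 \<noteq> {}"
  shows "potential_matches B R b1 = potential_matches B R b2"
proof -
  note levels = potential_matches_eq_discrepancy_level[OF disj loc_fin]
  have "discrepancy B R b1 = discrepancy B R b2"
    using assms(5) unfolding levels[OF \<open>b1 \<in> B\<close>] levels[OF \<open>b2 \<in> B\<close>] by auto
  then show ?thesis
    unfolding levels[OF \<open>b1 \<in> B\<close>] levels[OF \<open>b2 \<in> B\<close>] by simp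
qed

end
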